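(* Let $A$ be a finite tree rooted at $e$, with all arcs directed from the root towards the leaves, let $R\subseteq V(A)$ be a set of destinations containing all leaves of $A$, and let $D\subseteq V(A)$. Let $u\neq e$ be a vertex of $A$ having $\ell$ children $u_1,\dots,u_\ell$, and for each $i$, $1\le i\le \ell$, let $(b_i,d_i,\mathrm{load}_i)$ be the window of the solution $\mathcal{S}(D)$ on the arc $a^{u_i}$. Then the window of $\mathcal{S}(D)$ on the arc $a^{u}$ is \[ \begin{cases} \left(1,\ 1+\sum_{i=1}^{\ell} d_i,\ \sum_{i=1}^{\ell}\mathrm{load}_i+1\right) & \text{if } u\in D,\\ \left(1+\sum_{i=1}^{\ell} b_i,\ \sum_{i=1}^{\ell} d_i,\ \sum_{i=1}^{\ell}\mathrm{load}_i+\sum_{i=1}^{\ell} b_i+1\right) & \text{if } u\notin D \text{ and } u\in R,\\ \left(\sum_{i=1}^{\ell} b_i,\ \sum_{i=1}^{\ell} d_i,\ \sum_{i=1}^{\ell}\mathrm{load}_i+\sum_{i=1}^{\ell} b_i\right) & \text{if } u\notin D \text{ and } u\notin R. \end{cases} \]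
   Context: Setting (multicast with diffusing nodes): $A$ is a multicast tree for a request $(e,R)$: a tree rooted at the source $e$, arcs directed away from $e$, whose leaves lie in the destination set $R$. A set $D\subseteq V(A)$ is a set of diffusing (branching) nodes. The solution $\mathcal{S}(D)$ is a set of directed paths in $A$ such that: every node of $R$ is the final extremity of exactly one path; every node of $D$ is the final extremity of at most one path; the origin of each path is either $e$ or a node of $D$ which is itself the final extremity of some path; a node of $D$ lies on a path only as its origin or final extremity. As in the paper, $\mathcal{S}(D)$ is taken to be the solution in which each vertex $x\neq e$ of $R\cup D$ is the final extremity of exactly one path, whose origin is the nearest proper ancestor of $x$ belonging to $D\cup\{e\}$. For a vertex $u$, $A^u$ is the subtree of $A$ rooted at $u$, and for $u\neq e$, $a^u$ is the arc joining the parent of $u$ to $u$. The path number $\mathrm{pn}(u)$ is the number of paths of $\mathcal{S}(D)$ that pass through $u$ or terminate at $u$ (equivalently, that use the arc $a^u$). The window of $\mathcal{S}(D)$ on arc $a^u$ is the triple $(\mathrm{pn}(u),\ |D\cap V(A^u)|,\ \mathrm{load})$, where $\mathrm{load}=\sum_{w\in V(A^u)}\mathrm{pn}(w)$ is the load of $\mathcal{S}(D)$ in $A^u$, i.e. the number of pairs (path, arc) with the path using the arc, over the arcs of $A^u$ together with $a^u$. *)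

theory Defs
  imports Main
begin

text \<open>A finite rooted tree A is given by its vertex set V, its root e and a parent
function par (with par e = e by convention). The arcs are (par v, v) for v in V - {e},
directed away from the root; a^v denotes the arc (par v, v).\<close>

definition rooted_tree :: "'a set \<Rightarrow> 'a \<Rightarrow> ('a \<Rightarrow> 'a) \<Rightarrow> bool" where
  "rooted_tree V e par \<longleftrightarrow> finite V \<and> e \<in> V \<and> par e = e \<and>
     (\<forall>v\<in>V. par v \<in> V \<and> (\<exists>k. (par ^^ k) v = e))"

definition children :: "'a set \<Rightarrow> 'a \<Rightarrow> ('a \<Rightarrow> 'a) \<Rightarrow> 'a \<Rightarrow> 'a set" where
  "children V e par u = {w \<in> V. w \<noteq> e \<and> par w = u}"

definition leaves :: "'a set \<Rightarrow> 'a \<Rightarrow> ('a \<Rightarrow> 'a) \<Rightarrow> 'a set" where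
  "leaves V e par = {v \<in> V. children V e par v = {}}"

definition anc_eq :: "('a \<Rightarrow> 'a) \<Rightarrow> 'a \<Rightarrow> 'a \<Rightarrow> bool" where
  "anc_eq par v w \<longleftrightarrow> (\<exists>k. (par ^^ k) v = w)"

definition subtree :: "'a set \<Rightarrow> ('a \<Rightarrow> 'a) \<Rightarrow> 'a \<Rightarrow> 'a set" where
  "subtree V par u = {w \<in> V. anc_eq par w u}"

definition orig_dist :: "'a \<Rightarrow> ('a \<Rightarrow> 'a) \<Rightarrow> 'a set \<Rightarrow> 'a \<Rightarrow> nat" where
  "orig_dist e par D x = (LEAST k. 0 < k \<and> (par ^^ k) x \<in> D \<union> {e})"

text \<open>the directed path of S(D) ending at x, as the list of its vertices from its origin
(nearest proper ancestor of x in D \<union> {e}) down to x\<close>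
definition path_to :: "'a \<Rightarrow> ('a \<Rightarrow> 'a) \<Rightarrow> 'a set \<Rightarrow> 'a \<Rightarrow> 'a list" where
  "path_to e par D x = rev (map (\<lambda>i. (par ^^ i) x) [0..<Suc (orig_dist e par D x)])"

definition sol :: "'a \<Rightarrow> ('a \<Rightarrow> 'a) \<Rightarrow> 'a set \<Rightarrow> 'a set \<Rightarrow> 'a list set" where
  "sol e par R D = path_to e par D ` ((R \<union> D) - {e})"

text \<open>path number of u: number of paths of S(D) using the arc a^u, i.e. having u as a
non-origin vertex\<close>
definition pn :: "'a \<Rightarrow> ('a \<Rightarrow> 'a) \<Rightarrow> 'a set \<Rightarrow> 'a set \<Rightarrow> 'a \<Rightarrow> nat" where
  "pn e par R D u = card {P \<in> sol e par R D. u \<in> set (tl P)}"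

definition load :: "'a set \<Rightarrow> 'a \<Rightarrow> ('a \<Rightarrow> 'a) \<Rightarrow> 'a set \<Rightarrow> 'a set \<Rightarrow> 'a \<Rightarrow> nat" where
  "load V e par R D u = (\<Sum>w\<in>subtree V par u. pn e par R D w)"

definition window :: "'a set \<Rightarrow> 'a \<Rightarrow> ('a \<Rightarrow> 'a) \<Rightarrow> 'a set \<Rightarrow> 'a set \<Rightarrow> 'a \<Rightarrow> nat \<times> nat \<times> nat" where
  "window V e par R D u =
     (pn e par R D u, card (D \<inter> subtree V par u), load V e par R D u)"

end

theory Submission
  imports Defs "HOL-Library.Disjoint_Sets"
begin

text \<open>The subtree \<open>A\<^sup>u\<close> is the disjoint union of \<open>{u}\<close> and the subtrees of the children of \<open>u\<close>,
  which makes the number of diffusing nodes and the load additive. A path of \<open>\<S>(D)\<close> ending at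
  \<open>x\<close> uses the arc \<open>a\<^sup>u\<close> iff \<open>u\<close> is an ancestor of \<open>x\<close> and no vertex strictly above \<open>x\<close> up to \<open>u\<close>
  lies in \<open>D \<union> {e}\<close>. For \<open>u \<notin> D\<close> such a path either ends at \<open>u\<close> (iff \<open>u \<in> R\<close>) or uses the arc of
  exactly one child; for \<open>u \<in> D\<close> only the path ending at \<open>u\<close> qualifies.\<close>

lemma funpow_fixpoint: "f x = x \<Longrightarrow> (f ^^ n) x = x"
  by (induction n) auto

lemma rooted_tree_funpow_in:
  "rooted_tree V e par \<Longrightarrow> x \<in> V \<Longrightarrow> (par ^^ n) x \<in> V"
  by (induction n) (auto simp: rooted_tree_def)

lemma rooted_tree_funpow_neq:
  assumes tree: "rooted_tree V e par" and v: "v \<in> V" "v \<noteq> e" and n: "n > 0"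
  shows "(par ^^ n) v \<noteq> v"
proof
  assume cycle: "(par ^^ n) v = v"
  obtain k where k: "(par ^^ k) v = e"
    using tree v unfolding rooted_tree_def by blast
  have "(par ^^ (m * n)) v = v" for m
    by (induction m) (auto simp: funpow_add cycle)
  moreover have "k \<le> k * n"
    using n by simp
  then have "(par ^^ (k * n)) v = (par ^^ (k * n - k)) ((par ^^ k) v)"
    by (metis funpow_add le_add_diff_inverse2 o_apply)
  then have "(par ^^ (k * n)) v = e"
    using k funpow_fixpoint[of par e] tree unfolding rooted_tree_def by simp
  ultimately show False
    using v by simp
qed

lemma rooted_tree_funpow_eq_imp_eq:
  assumes tree: "rooted_tree V e par" and x: "x \<in> V" and u: "u \<noteq> e"
    and i: "(par ^^ i) x = u" and j: "(par ^^ j) x = u"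
  shows "i = j"
proof -
  have no_less: "\<not> i < j" if "(par ^^ i) x = u" "(par ^^ j) x = u" for i j
  proof
    assume "i < j"
    then have "(par ^^ (j - i)) u = u"
      using that by (metis funpow_add le_add_diff_inverse2 less_imp_le o_apply)
    then show False
      using rooted_tree_funpow_neq[OF tree _ u, of "j - i"] rooted_tree_funpow_in[OF tree x, of i]
        that \<open>i < j\<close> by auto
  qed
  show ?thesis
    using no_less[OF i j] no_less[OF j i] by simp
qed

definition descendants_via :: "('a \<Rightarrow> 'a) \<Rightarrow> 'a set \<Rightarrow> ('a \<Rightarrow> bool) \<Rightarrow> 'a \<Rightarrow> 'a set" where
  "descendants_via par S P u =
     {x \<in> S. \<exists>i. (par ^^ i) x = u \<and> (\<forall>j. 0 < j \<and> j \<le> i \<longrightarrow> P ((par ^^ j) x))}"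

lemma finite_descendants_via:
  "rooted_tree V e par \<Longrightarrow> S \<subseteq> V \<Longrightarrow> finite (descendants_via par S P u)"
  unfolding rooted_tree_def descendants_via_def by (auto intro: finite_subset)

lemma descendants_via_children:
  assumes tree: "rooted_tree V e par" and S: "S \<subseteq> V" and u: "u \<noteq> e" and P: "P u"
  shows "descendants_via par S P u =
           (S \<inter> {u}) \<union> (\<Union>c\<in>children V e par u. descendants_via par S P c)"
proof (intro equalityI subsetI)
  fix x assume "x \<in> descendants_via par S P u"
  then obtain i where x: "x \<in> S" and i: "(par ^^ i) x = u"
    and ok: "\<forall>j. 0 < j \<and> j \<le> i \<longrightarrow> P ((par ^^ j) x)"
    unfolding descendants_via_def by blast
  show "x \<in> (S \<inter> {u}) \<union> (\<Union>c\<in>children V e par u. descendants_via par S P c)"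
  proof (cases i)
    case 0
    then show ?thesis using i x by simp
  next
    case (Suc k)
    let ?c = "(par ^^ k) x"
    have "par ?c = u"
      using i Suc by (simp add: funpow_swap1)
    moreover have "?c \<in> V"
      using rooted_tree_funpow_in[OF tree] x S by blast
    moreover have "?c \<noteq> e"
      using \<open>par ?c = u\<close> u tree unfolding rooted_tree_def by auto
    ultimately have "?c \<in> children V e par u"
      unfolding children_def by blast
    moreover have "x \<in> descendants_via par S P ?c"
      unfolding descendants_via_def using x ok Suc by auto
    ultimately show ?thesis by blast
  qed
next
  fix x assume "x \<in> (S \<inter> {u}) \<union> (\<Union>c\<in>children V e par u. descendants_via par S P c)"
  then consider "x \<in> S" "x = u"
    | c i where "c \<in> children V e par u" "x \<in> S" "(par ^^ i) x = c"
        "\<forall>j. 0 < j \<and> j \<le> i \<longrightarrow> P ((par ^^ j) x)"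
    unfolding descendants_via_def by blast
  then show "x \<in> descendants_via par S P u"
  proof cases
    case 1
    then show ?thesis
      unfolding descendants_via_def by (auto intro!: exI[of _ 0])
  next
    case (2 c i)
    then have "(par ^^ Suc i) x = u"
      unfolding children_def by auto
    moreover have "\<forall>j. 0 < j \<and> j \<le> Suc i \<longrightarrow> P ((par ^^ j) x)"
      using 2 \<open>(par ^^ Suc i) x = u\<close> P by (metis le_Suc_eq)
    ultimately show ?thesis
      unfolding descendants_via_def using 2 by blast
  qed
qed

lemma disjoint_family_descendants_via:
  assumes tree: "rooted_tree V e par" and S: "S \<subseteq> V" and u: "u \<noteq> e"
  shows "disjoint_family_on (descendants_via par S P) (children V e par u)"
  unfolding disjoint_family_on_def
proof (intro ballI impI)
  fix c c' assume c: "c \<in> children V e par u" and c': "c' \<in> children V e par u" and "c \<noteq> c'"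
  show "descendants_via par S P c \<inter> descendants_via par S P c' = {}"
  proof (rule ccontr)
    assume "descendants_via par S P c \<inter> descendants_via par S P c' \<noteq> {}"
    then obtain x i i' where x: "x \<in> S" and i: "(par ^^ i) x = c" and i': "(par ^^ i') x = c'"
      unfolding descendants_via_def by blast
    then have "(par ^^ Suc i) x = u" "(par ^^ Suc i') x = u"
      using c c' unfolding children_def by auto
    then have "i = i'"
      using rooted_tree_funpow_eq_imp_eq[OF tree _ u] x S by blast
    then show False
      using i i' \<open>c \<noteq> c'\<close> by simp
  qed
qed

lemma not_mem_descendants_via_child:
  assumes tree: "rooted_tree V e par" and u: "u \<in> V" "u \<noteq> e"
    and c: "c \<in> children V e par u"
  shows "u \<notin> descendants_via par S P c"
proof
  assume "u \<in> descendants_via par S P c"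
  then obtain i where "(par ^^ i) u = c"
    unfolding descendants_via_def by blast
  then have "(par ^^ Suc i) u = u"
    using c unfolding children_def by simp
  then show False
    using rooted_tree_funpow_neq[OF tree u, of "Suc i"] by simp
qed

lemma subtree_eq_descendants_via: "subtree V par u = descendants_via par V (\<lambda>_. True) u"
  unfolding subtree_def descendants_via_def anc_eq_def by auto

lemma sum_subtree_children:
  assumes tree: "rooted_tree V e par" and u: "u \<in> V" "u \<noteq> e"
  shows "sum f (subtree V par u) = f u + (\<Sum>c\<in>children V e par u. sum f (subtree V par c))"
proof -
  let ?C = "children V e par u"
  have fin: "finite (subtree V par c)" for c
    unfolding subtree_eq_descendants_via using finite_descendants_via[OF tree] by blast
  have "finite ?C"
    using tree unfolding rooted_tree_def children_def by simp
  have "subtree V par u = insert u (\<Union>c\<in>?C. subtree V par c)"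
    unfolding subtree_eq_descendants_via
    using descendants_via_children[OF tree order_refl u(2), of "\<lambda>_. True"] u by auto
  moreover have "u \<notin> (\<Union>c\<in>?C. subtree V par c)"
    unfolding subtree_eq_descendants_via using not_mem_descendants_via_child[OF tree u] by blast
  moreover have "sum f (\<Union>c\<in>?C. subtree V par c) = (\<Sum>c\<in>?C. sum f (subtree V par c))"
    unfolding subtree_eq_descendants_via
    using sum.UNION_disjoint_family[OF \<open>finite ?C\<close> _ disjoint_family_descendants_via[OF tree order_refl u(2)]]
      finite_descendants_via[OF tree order_refl] by blast
  ultimately show ?thesis
    using fin \<open>finite ?C\<close> by simp
qed

lemma card_inter_subtree_children:
  assumes tree: "rooted_tree V e par" and u: "u \<in> V" "u \<noteq> e"
  shows "card (D \<inter> subtree V par u) =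
           of_bool (u \<in> D) + (\<Sum>c\<in>children V e par u. card (D \<inter> subtree V par c))"
proof -
  have card_eq: "card (D \<inter> subtree V par v) = (\<Sum>w\<in>subtree V par v. of_bool (w \<in> D))" for v
  proof -
    have "finite (subtree V par v)"
      unfolding subtree_eq_descendants_via using finite_descendants_via[OF tree] by blast
    then show ?thesis
      by (simp add: Int_commute Collect_conj_eq[symmetric] Int_def sum.inter_filter[symmetric])
  qed
  show ?thesis
    unfolding card_eq by (rule sum_subtree_children[OF tree u])
qed

lemma set_tl_path_to:
  "set (tl (path_to e par D x)) = {(par ^^ i) x | i. i < orig_dist e par D x}"
proof -
  have "tl (path_to e par D x) = rev (map (\<lambda>i. (par ^^ i) x) [0..<orig_dist e par D x])"
    unfolding path_to_def by simp
  then show ?thesis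
    by auto
qed

lemma less_orig_dist_iff:
  assumes tree: "rooted_tree V e par" and x: "x \<in> V"
  shows "i < orig_dist e par D x \<longleftrightarrow> (\<forall>j. 0 < j \<and> j \<le> i \<longrightarrow> (par ^^ j) x \<notin> D \<union> {e})"
proof -
  let ?Q = "\<lambda>k. 0 < k \<and> (par ^^ k) x \<in> D \<union> {e}"
  obtain k where "(par ^^ k) x = e"
    using tree x unfolding rooted_tree_def by blast
  then have "?Q (Suc k)"
    using tree unfolding rooted_tree_def by simp
  then have "?Q (orig_dist e par D x)"
    unfolding orig_dist_def by (rule LeastI)
  moreover have "\<not> ?Q j" if "j < orig_dist e par D x" for j
    using that unfolding orig_dist_def by (rule not_less_Least)
  ultimately show ?thesis
    by (meson le_less_trans not_le)
qed

text \<open>A path of \<open>\<S>(D)\<close> is determined by its final extremity.\<close>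

lemma pn_eq_card_descendants_via:
  assumes tree: "rooted_tree V e par" and R: "R \<subseteq> V" and D: "D \<subseteq> V"
  shows "pn e par R D u = card (descendants_via par (R \<union> D - {e}) (\<lambda>y. y \<notin> D \<union> {e}) u)"
proof -
  let ?S = "R \<union> D - {e}"
  let ?f = "path_to e par D"
  have "last (?f x) = x" for x
    unfolding path_to_def by (simp add: last_rev hd_map del: upt_Suc)
  then have "inj_on ?f ?S"
    by (metis inj_onI)
  have "u \<in> set (tl (?f x)) \<longleftrightarrow>
          (\<exists>i. (par ^^ i) x = u \<and> (\<forall>j. 0 < j \<and> j \<le> i \<longrightarrow> (par ^^ j) x \<notin> D \<union> {e}))"
    if "x \<in> ?S" for x
    unfolding set_tl_path_to using less_orig_dist_iff[OF tree, of x] that R D by blast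
  then have "{P \<in> sol e par R D. u \<in> set (tl P)} =
               ?f ` descendants_via par ?S (\<lambda>y. y \<notin> D \<union> {e}) u"
    unfolding sol_def descendants_via_def by auto
  then show ?thesis
    unfolding pn_def
    by (metis (no_types, lifting) \<open>inj_on ?f ?S\<close> card_image descendants_via_def inj_on_subset
        mem_Collect_eq subsetI)
qed

lemma pn_of_mem:
  assumes tree: "rooted_tree V e par" and R: "R \<subseteq> V" and D: "D \<subseteq> V"
    and u: "u \<in> D" "u \<noteq> e"
  shows "pn e par R D u = 1"
proof -
  have "x = u" if "(par ^^ i) x = u" "\<forall>j. 0 < j \<and> j \<le> i \<longrightarrow> (par ^^ j) x \<notin> D \<union> {e}"
    for x i
  proof -
    have "i = 0"
      using that u by (metis UnI1 le_refl neq0_conv)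
    then show ?thesis
      using that by simp
  qed
  then have "descendants_via par (R \<union> D - {e}) (\<lambda>y. y \<notin> D \<union> {e}) u = {u}"
    unfolding descendants_via_def using u by (blast intro: funpow_0)
  then show ?thesis
    using pn_eq_card_descendants_via[OF tree R D] by simp
qed

lemma pn_of_not_mem:
  assumes tree: "rooted_tree V e par" and R: "R \<subseteq> V" and D: "D \<subseteq> V"
    and u: "u \<in> V" "u \<notin> D" "u \<noteq> e"
  shows "pn e par R D u = of_bool (u \<in> R) + (\<Sum>c\<in>children V e par u. pn e par R D c)"
proof -
  let ?S = "R \<union> D - {e}" and ?P = "\<lambda>y. y \<notin> D \<union> {e}"
  let ?C = "children V e par u"
  have S: "?S \<subseteq> V"
    using R D by auto
  have "finite ?C"
    using tree unfolding rooted_tree_def children_def by simp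
  have "pn e par R D u = card ((?S \<inter> {u}) \<union> (\<Union>c\<in>?C. descendants_via par ?S ?P c))"
    using pn_eq_card_descendants_via[OF tree R D] descendants_via_children[OF tree S u(3), of ?P] u
    by simp
  also have "\<dots> = card (?S \<inter> {u}) + card (\<Union>c\<in>?C. descendants_via par ?S ?P c)"
    using not_mem_descendants_via_child[OF tree u(1,3)] \<open>finite ?C\<close> finite_descendants_via[OF tree S]
    by (subst card_Un_disjoint) auto
  also have "card (\<Union>c\<in>?C. descendants_via par ?S ?P c) = (\<Sum>c\<in>?C. pn e par R D c)"
    unfolding pn_eq_card_descendants_via[OF tree R D]
    using card_UN_disjoint'[OF disjoint_family_descendants_via[OF tree S u(3)] _ \<open>finite ?C\<close>]
      finite_descendants_via[OF tree S] by blast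
  finally show ?thesis
    using u by auto
qed

theorem lemma2:
  fixes V :: "'a set" and e :: 'a and par :: "'a \<Rightarrow> 'a" and R D :: "'a set" and u :: 'a
  assumes tree: "rooted_tree V e par"
    and R_sub: "R \<subseteq> V" and leaves_R: "leaves V e par \<subseteq> R"
    and D_sub: "D \<subseteq> V"
    and u_in: "u \<in> V" and u_ne: "u \<noteq> e"
  defines "C \<equiv> children V e par u"
  defines "sb \<equiv> (\<Sum>c\<in>C. fst (window V e par R D c))"
    and "sd \<equiv> (\<Sum>c\<in>C. fst (snd (window V e par R D c)))"
    and "sl \<equiv> (\<Sum>c\<in>C. snd (snd (window V e par R D c)))"
  shows "window V e par R D u =
     (if u \<in> D then (1, 1 + sd, sl + 1)
      else if u \<in> R then (1 + sb, sd, sl + sb + 1)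
      else (sb, sd, sl + sb))"
proof -
  have pn: "pn e par R D u = (if u \<in> D then 1 else of_bool (u \<in> R) + sb)"
    using pn_of_mem[OF tree R_sub D_sub _ u_ne] pn_of_not_mem[OF tree R_sub D_sub u_in _ u_ne]
    unfolding sb_def C_def window_def by simp
  have "card (D \<inter> subtree V par u) = of_bool (u \<in> D) + sd"
    using card_inter_subtree_children[OF tree u_in u_ne] unfolding sd_def C_def window_def by simp
  moreover have "load V e par R D u = pn e par R D u + sl"
    using sum_subtree_children[OF tree u_in u_ne] unfolding load_def sl_def C_def window_def by simp
  ultimately show ?thesis
    unfolding window_def using pn by auto
qed

end
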